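(* Consider the discrete first-price auction in the model without ties, with values drawn i.i.d. from a distribution with full support on $X$. Let $\beta$ be a symmetric equilibrium (SE) bidding function, let $v\in X$ with $v+1\in X$, and let $b=\beta(v)$. Then $\beta(v+1)\le b+1$.
   Context: Model. There are $n\ge 2$ risk-neutral bidders competing for one indivisible object. Normalise the grid so that values and bids lie in $X=\{0,1,2,\dots,x\}$ for some $x\in\mathbb N$. Each bidder $i$ privately learns a value $v_i\in X$; values are drawn independently from a common distribution in which every element of $X$ has strictly positive probability. Each bidder submits a bid $b_i\in X$. A (pure) strategy is a bidding function $\beta:X\to X$. In the model without ties, bidder $i$ wins iff $b_i>b_j$ for all $j\neq i$ (if the highest bid is tied, nobody wins). In the first-price auction, a bidder with value $v_i$ bidding $b_i$ gets expected payoff $(v_i-b_i)\Pr(i\text{ wins})$. An equilibrium is a profile of bidding functions such that each bidder's bidding function maximises their expected payoff given the others' bidding functions (a pure-strategy Bayes–Nash equilibrium) and such that no bidder uses a weakly dominated bidding function (a bidding function is weakly dominated if some other bidding function yields at least as high expected payoff against every profile of opponents' bidding functions, and strictly higher against some). A symmetric equilibrium (SE) is an equilibrium in which all bidders use the same bidding function $\beta$. *)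

theory Defs
  imports Complex_Main
begin

text \<open>Grid X = {0..x}. A bidding function is a map nat => nat sending X into X
  (values outside X are irrelevant).
  An opponent profile with m opponents is bs :: nat => (nat => nat), bs j for j < m.\<close>

definition valid_bf :: "nat \<Rightarrow> (nat \<Rightarrow> nat) \<Rightarrow> bool" where
  "valid_bf x \<beta> \<longleftrightarrow> (\<forall>v\<le>x. \<beta> v \<le> x)"

definition full_support_dist :: "nat \<Rightarrow> (nat \<Rightarrow> real) \<Rightarrow> bool" where
  "full_support_dist x p \<longleftrightarrow> (\<forall>v\<le>x. p v > 0) \<and> (\<Sum>v\<le>x. p v) = 1"

text \<open>Probability (no ties model) that bid b strictly beats all m opponents,
  opponent j using bidding function bs j, values i.i.d. with law p.\<close>
definition win_prob :: "nat \<Rightarrow> (nat \<Rightarrow> real) \<Rightarrow> nat \<Rightarrow> (nat \<Rightarrow> nat \<Rightarrow> nat) \<Rightarrow> nat \<Rightarrow> real" where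
  "win_prob x p m bs b = (\<Prod>j<m. (\<Sum>w\<in>{w. w \<le> x \<and> bs j w < b}. p w))"

definition fp_payoff :: "nat \<Rightarrow> (nat \<Rightarrow> real) \<Rightarrow> nat \<Rightarrow> (nat \<Rightarrow> nat \<Rightarrow> nat) \<Rightarrow> (nat \<Rightarrow> nat) \<Rightarrow> real" where
  "fp_payoff x p m bs \<gamma> = (\<Sum>v\<le>x. p v * ((real v - real (\<gamma> v)) * win_prob x p m bs (\<gamma> v)))"

definition valid_profile :: "nat \<Rightarrow> nat \<Rightarrow> (nat \<Rightarrow> nat \<Rightarrow> nat) \<Rightarrow> bool" where
  "valid_profile x m bs \<longleftrightarrow> (\<forall>j<m. valid_bf x (bs j))"

definition weakly_dominated :: "nat \<Rightarrow> (nat \<Rightarrow> real) \<Rightarrow> nat \<Rightarrow> (nat \<Rightarrow> nat) \<Rightarrow> bool" where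
  "weakly_dominated x p m \<beta> \<longleftrightarrow>
     (\<exists>\<gamma>. valid_bf x \<gamma> \<and>
        (\<forall>bs. valid_profile x m bs \<longrightarrow> fp_payoff x p m bs \<gamma> \<ge> fp_payoff x p m bs \<beta>) \<and>
        (\<exists>bs. valid_profile x m bs \<and> fp_payoff x p m bs \<gamma> > fp_payoff x p m bs \<beta>))"

definition symmetric_eq :: "nat \<Rightarrow> nat \<Rightarrow> (nat \<Rightarrow> real) \<Rightarrow> (nat \<Rightarrow> nat) \<Rightarrow> bool" where
  "symmetric_eq n x p \<beta> \<longleftrightarrow>
     valid_bf x \<beta> \<and>
     (\<forall>\<gamma>. valid_bf x \<gamma> \<longrightarrow>
        fp_payoff x p (n - 1) (\<lambda>_. \<beta>) \<gamma> \<le> fp_payoff x p (n - 1) (\<lambda>_. \<beta>) \<beta>) \<and>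
     \<not> weakly_dominated x p (n - 1) \<beta>"

end

theory Submission
  imports Defs
begin

text \<open>Undominatedness
  rules out overbidding, so type 0 bids 0 and every positive bid wins with positive
  probability; pointwise optimality makes \<beta> monotone by the usual revealed-preference
  exchange argument. If \<beta> (v+1) exceeded \<beta> v + 1, monotonicity would leave no type bidding
  in between, so the lower bid \<beta> v + 1 would win exactly as often at a strictly lower price.\<close>

lemma fp_payoff_fun_upd:
  assumes "w \<le> x"
  shows "fp_payoff x p m bs (\<beta>(w := a)) = fp_payoff x p m bs \<beta>
     + p w * ((real w - real a) * win_prob x p m bs a)
     - p w * ((real w - real (\<beta> w)) * win_prob x p m bs (\<beta> w))"
proof -
  let ?f = "\<lambda>\<gamma> v. p v * ((real v - real (\<gamma> v)) * win_prob x p m bs (\<gamma> v))"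
  have w: "w \<in> {..x}" using assms by simp
  have rest: "sum (?f (\<beta>(w := a))) ({..x} - {w}) = sum (?f \<beta>) ({..x} - {w})"
    by (rule sum.cong) auto
  show ?thesis
    unfolding fp_payoff_def
    using sum.remove[OF _ w, of "?f (\<beta>(w := a))"] sum.remove[OF _ w, of "?f \<beta>"] rest
    by simp
qed

lemma full_support_dist_pos: "full_support_dist x p \<Longrightarrow> w \<le> x \<Longrightarrow> p w > 0"
  by (simp add: full_support_dist_def)

lemma win_prob_nonneg:
  assumes "full_support_dist x p"
  shows "win_prob x p m bs b \<ge> 0"
  unfolding win_prob_def
  by (intro prod_nonneg sum_nonneg) (auto dest: full_support_dist_pos[OF assms] intro: less_imp_le)

lemma win_prob_mono:
  assumes "full_support_dist x p" and "b \<le> b'"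
  shows "win_prob x p m bs b \<le> win_prob x p m bs b'"
  unfolding win_prob_def
proof (rule prod_mono)
  fix j
  have "\<And>w. w \<le> x \<Longrightarrow> 0 \<le> p w" using full_support_dist_pos[OF assms(1)] less_imp_le by blast
  then show "0 \<le> (\<Sum>w\<in>{w. w \<le> x \<and> bs j w < b}. p w) \<and>
      (\<Sum>w\<in>{w. w \<le> x \<and> bs j w < b}. p w) \<le> (\<Sum>w\<in>{w. w \<le> x \<and> bs j w < b'}. p w)"
    using assms(2) by (auto intro!: sum_nonneg sum_mono2)
qed

lemma win_prob_pos:
  assumes "full_support_dist x p" and "\<And>j. j < m \<Longrightarrow> bs j 0 < b"
  shows "win_prob x p m bs b > 0"
  unfolding win_prob_def
proof (rule prod_pos)
  fix j assume "j \<in> {..<m}"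
  then have zero: "0 \<in> {w. w \<le> x \<and> bs j w < b}" using assms(2) by simp
  have "p 0 \<le> (\<Sum>w\<in>{w. w \<le> x \<and> bs j w < b}. p w)"
    by (rule member_le_sum[OF zero]) (auto dest: full_support_dist_pos[OF assms(1)])
  then show "(\<Sum>w\<in>{w. w \<le> x \<and> bs j w < b}. p w) > 0"
    using full_support_dist_pos[OF assms(1), of 0] by simp
qed

lemma win_prob_eq_if_no_bid_between:
  assumes "\<And>j w. j < m \<Longrightarrow> w \<le> x \<Longrightarrow> bs j w < c \<Longrightarrow> bs j w < b" and "b \<le> c"
  shows "win_prob x p m bs b = win_prob x p m bs c"
proof -
  have "\<And>j. j < m \<Longrightarrow> {w. w \<le> x \<and> bs j w < b} = {w. w \<le> x \<and> bs j w < c}"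
    using assms by fastforce
  then show ?thesis unfolding win_prob_def by (intro prod.cong) auto
qed

lemma undominated_bid_le_value:
  assumes "full_support_dist x p" and "valid_bf x \<beta>" and "\<not> weakly_dominated x p m \<beta>"
    and "w \<le> x"
  shows "\<beta> w \<le> w"
proof (rule ccontr)
  assume over: "\<not> \<beta> w \<le> w"
  have gain: "fp_payoff x p m bs \<beta> + p w * ((real (\<beta> w) - real w) * win_prob x p m bs (\<beta> w))
      = fp_payoff x p m bs (\<beta>(w := w))" for bs
    unfolding fp_payoff_fun_upd[OF assms(4)] by (simp add: algebra_simps)
  have "weakly_dominated x p m \<beta>"
    unfolding weakly_dominated_def
  proof (intro exI conjI allI impI)
    show "valid_bf x (\<beta>(w := w))" using assms(2,4) by (auto simp: valid_bf_def)
    fix bs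
    have "0 \<le> p w * ((real (\<beta> w) - real w) * win_prob x p m bs (\<beta> w))"
      using over full_support_dist_pos[OF assms(1,4)] win_prob_nonneg[OF assms(1)] by simp
    then show "fp_payoff x p m bs \<beta> \<le> fp_payoff x p m bs (\<beta>(w := w))" using gain[of bs] by simp
  next
    \<comment> \<open>Against opponents who always bid 0, the overbid at w wins for sure and loses money.\<close>
    let ?zero = "\<lambda>_ _. 0 :: nat"
    show "valid_profile x m ?zero" by (simp add: valid_profile_def valid_bf_def)
    have "win_prob x p m ?zero (\<beta> w) = 1"
      using over assms(1) by (simp add: win_prob_def full_support_dist_def atMost_def)
    then have "0 < p w * ((real (\<beta> w) - real w) * win_prob x p m ?zero (\<beta> w))"
      using over full_support_dist_pos[OF assms(1,4)] by simp
    then show "fp_payoff x p m ?zero \<beta> < fp_payoff x p m ?zero (\<beta>(w := w))"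
      using gain[of ?zero] by simp
  qed
  with assms(3) show False by simp
qed

lemma symmetric_eq_best_bid:
  assumes "full_support_dist x p" and "symmetric_eq n x p \<beta>" and "w \<le> x" and "a \<le> x"
  shows "(real w - real a) * win_prob x p (n - 1) (\<lambda>_. \<beta>) a
    \<le> (real w - real (\<beta> w)) * win_prob x p (n - 1) (\<lambda>_. \<beta>) (\<beta> w)"
proof -
  have "valid_bf x (\<beta>(w := a))"
    using assms(2-4) by (auto simp: valid_bf_def symmetric_eq_def)
  then have "fp_payoff x p (n - 1) (\<lambda>_. \<beta>) (\<beta>(w := a)) \<le> fp_payoff x p (n - 1) (\<lambda>_. \<beta>) \<beta>"
    using assms(2) by (simp add: symmetric_eq_def)
  then show ?thesis
    using full_support_dist_pos[OF assms(1,3)] unfolding fp_payoff_fun_upd[OF assms(3)] by simp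
qed

lemma symmetric_eq_win_prob_pos:
  assumes "full_support_dist x p" and "symmetric_eq n x p \<beta>" and "b \<ge> 1"
  shows "win_prob x p (n - 1) (\<lambda>_. \<beta>) b > 0"
proof -
  have "\<beta> 0 = 0"
    using undominated_bid_le_value[OF assms(1), of \<beta> "n - 1" 0] assms(2)
    by (simp add: symmetric_eq_def)
  then show ?thesis using win_prob_pos[OF assms(1)] assms(3) by simp
qed

lemma symmetric_eq_mono:
  assumes "full_support_dist x p" and "symmetric_eq n x p \<beta>" and "w < w'" and "w' \<le> x"
  shows "\<beta> w \<le> \<beta> w'"
proof (rule ccontr)
  assume down: "\<not> \<beta> w \<le> \<beta> w'"
  let ?W = "win_prob x p (n - 1) (\<lambda>_. \<beta>)"
  have bids: "\<beta> w \<le> x" "\<beta> w' \<le> x"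
    using assms(2-4) by (auto simp: valid_bf_def symmetric_eq_def)
  have at_w: "(real w - real (\<beta> w')) * ?W (\<beta> w') \<le> (real w - real (\<beta> w)) * ?W (\<beta> w)"
    using symmetric_eq_best_bid[OF assms(1,2) _ bids(2)] assms(3,4) by simp
  have at_w': "(real w' - real (\<beta> w)) * ?W (\<beta> w) \<le> (real w' - real (\<beta> w')) * ?W (\<beta> w')"
    using symmetric_eq_best_bid[OF assms(1,2,4) bids(1)] .
  \<comment> \<open>Adding the two optimality conditions: the higher type wins at least as often.\<close>
  have "(real w' - real w) * (?W (\<beta> w') - ?W (\<beta> w)) \<ge> 0"
    using at_w at_w' by (simp add: algebra_simps)
  then have "?W (\<beta> w) \<le> ?W (\<beta> w')"
    using assms(3) by (simp add: zero_le_mult_iff)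
  moreover have "?W (\<beta> w') \<le> ?W (\<beta> w)" using win_prob_mono[OF assms(1)] down by simp
  ultimately have "?W (\<beta> w') = ?W (\<beta> w)" by simp
  moreover have "?W (\<beta> w) > 0" using symmetric_eq_win_prob_pos[OF assms(1,2)] down by simp
  ultimately show False using at_w down by simp
qed

theorem lemma4:
  fixes n x :: nat and p :: "nat \<Rightarrow> real" and \<beta> :: "nat \<Rightarrow> nat" and v :: nat
  assumes "n \<ge> 2"
    and "full_support_dist x p"
    and "symmetric_eq n x p \<beta>"
    and "v + 1 \<le> x"
  shows "\<beta> (v + 1) \<le> \<beta> v + 1"
proof (rule ccontr)
  assume jump: "\<not> \<beta> (v + 1) \<le> \<beta> v + 1"
  let ?W = "win_prob x p (n - 1) (\<lambda>_. \<beta>)"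
  have mono: "\<And>w w'. w \<le> w' \<Longrightarrow> w' \<le> x \<Longrightarrow> \<beta> w \<le> \<beta> w'"
    using symmetric_eq_mono[OF assms(2,3)] by (metis order_le_less)
  have "\<beta> w < \<beta> v + 1" if "w \<le> x" "\<beta> w < \<beta> (v + 1)" for w
    using mono[of w v] mono[of "v + 1" w] that assms(4) by (cases "w \<le> v") auto
  then have same_odds: "?W (\<beta> v + 1) = ?W (\<beta> (v + 1))"
    using jump by (intro win_prob_eq_if_no_bid_between) auto
  have "\<beta> (v + 1) \<le> x" using assms(3,4) by (simp add: symmetric_eq_def valid_bf_def)
  then have "(real (v + 1) - real (\<beta> v + 1)) * ?W (\<beta> v + 1)
      \<le> (real (v + 1) - real (\<beta> (v + 1))) * ?W (\<beta> (v + 1))"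
    using symmetric_eq_best_bid[OF assms(2,3,4), of "\<beta> v + 1"] jump by simp
  moreover have "?W (\<beta> (v + 1)) > 0" using symmetric_eq_win_prob_pos[OF assms(2,3)] jump by simp
  ultimately show False using same_odds jump by simp
qed

end
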